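(* Let $f,g\colon[0,2\pi)\times[0,2\pi)\to\mathbb{R}$ be given by $f(\theta_1,\theta_2)=\sin\theta_1+\sin(\theta_2-\theta_1)-\sin\theta_2$ and $g(\theta_1,\theta_2)=\cos\theta_1+\cos(\theta_2-\theta_1)+\cos\theta_2$. Then: (i) $f(\theta_1,\theta_2)\in[-\tfrac{3\sqrt3}{2},\tfrac{3\sqrt3}{2}]$ for all $\theta_1,\theta_2\in[0,2\pi)$, and $f(\theta_1,\theta_2)\in\{-\tfrac{3\sqrt3}{2},\tfrac{3\sqrt3}{2}\}$ if and only if $g(\theta_1,\theta_2)=-\tfrac32$; (ii) $f(\theta_1,\theta_1)=f(\theta_1,0)=f(0,\theta_2)=0$ for all $\theta_1,\theta_2\in[0,2\pi)$; moreover, for every $\theta_2\in(0,2\pi)$, $f(\cdot,\theta_2)>0$ on $(0,\theta_2)$ and $f(\cdot,\theta_2)<0$ on $(\theta_2,2\pi)$. *)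

theory Defs
  imports Complex_Main
begin

definition f21 :: "real \<Rightarrow> real \<Rightarrow> real" where
  "f21 t1 t2 = sin t1 + sin (t2 - t1) - sin t2"

definition g21 :: "real \<Rightarrow> real \<Rightarrow> real" where
  "g21 t1 t2 = cos t1 + cos (t2 - t1) + cos t2"

end

theory Submission imports Defs begin

text \<open>
  With \<open>S = sin (t2/2)\<close>, \<open>C = cos (t2/2)\<close> and \<open>D = cos (t1 - t2/2)\<close> the sum-to-product
  formulas give \<open>f21 = 2 S (D - C)\<close> and \<open>g21 = 2 C D + 2 C\<^sup>2 - 1\<close>. Replacing \<open>(C, D)\<close> by
  \<open>(-C, -D)\<close> we may take \<open>C \<ge> 0\<close>; then \<open>f21\<^sup>2 \<le> 4 (1 - C\<^sup>2) (1 + C)\<^sup>2 \<le> 27/4\<close>, and both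
  \<open>f21\<^sup>2 = 27/4\<close> and \<open>g21 = -3/2\<close> turn out to mean exactly \<open>C = 1/2, D = -1\<close>.
  The sign pattern comes from the product formula
  \<open>f21 t1 t2 = 4 sin (t1/2) sin ((t2 - t1)/2) sin (t2/2)\<close>.
\<close>

lemma f21_half_angle: "f21 t1 t2 = 2 * sin (t2/2) * (cos (t1 - t2/2) - cos (t2/2))"
proof -
  have "t1 = t2/2 + (t1 - t2/2)" "t2 - t1 = t2/2 - (t1 - t2/2)" "t2 = 2 * (t2/2)" by simp_all
  then show ?thesis unfolding f21_def
    using sin_double[of "t2/2"] sin_add[of "t2/2" "t1 - t2/2"] sin_diff[of "t2/2" "t1 - t2/2"]
    by (simp add: algebra_simps)
qed

lemma g21_half_angle: "g21 t1 t2 = 2 * cos (t2/2) * cos (t1 - t2/2) + 2 * (cos (t2/2))\<^sup>2 - 1"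
proof -
  have "t1 = t2/2 + (t1 - t2/2)" "t2 - t1 = t2/2 - (t1 - t2/2)" "t2 = 2 * (t2/2)" by simp_all
  then show ?thesis unfolding g21_def
    using cos_double_cos[of "t2/2"] cos_add[of "t2/2" "t1 - t2/2"] cos_diff[of "t2/2" "t1 - t2/2"]
    by (simp add: algebra_simps)
qed

lemma f21_sin_prod: "f21 t1 t2 = 4 * sin (t1/2) * sin ((t2 - t1)/2) * sin (t2/2)"
proof -
  define x where "x = t1/2"
  define y where "y = (t2 - t1)/2"
  have "t1 = 2*x" "t2 - t1 = 2*y" "t2 = 2*x + 2*y" "t2/2 = x + y"
    unfolding x_def y_def by (simp_all add: field_simps)
  then have "f21 t1 t2 = sin (2*x) + sin (2*y) - sin (2*x + 2*y)"
    unfolding f21_def by (simp only:)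
  also have "\<dots> = 4 * sin x * sin y * sin (x + y)"
    unfolding sin_add cos_add sin_double cos_double
    using sin_cos_squared_add[of x] sin_cos_squared_add[of y] by algebra
  finally have "f21 t1 t2 = 4 * sin x * sin y * sin (t2/2)" by (simp only: \<open>t2/2 = x + y\<close>)
  then show ?thesis unfolding x_def y_def .
qed

lemma half_angle_sq_bound_nonneg:
  fixes S C D :: real
  assumes unit: "S\<^sup>2 + C\<^sup>2 = 1" and "\<bar>D\<bar> \<le> 1" and "0 \<le> C"
  shows "(2*S*(D - C))\<^sup>2 \<le> 27/4"
    and "(2*S*(D - C))\<^sup>2 = 27/4 \<longleftrightarrow> C = 1/2 \<and> D = -1"
proof -
  have "(2*S*(D - C))\<^sup>2 = 4 * S\<^sup>2 * (D - C)\<^sup>2" by (simp add: power_mult_distrib)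
  also have "S\<^sup>2 = 1 - C\<^sup>2" using unit by simp
  finally have F: "(2*S*(D - C))\<^sup>2 = 4 * (1 - C\<^sup>2) * (D - C)\<^sup>2" .
  have "C\<^sup>2 \<le> 1" using unit zero_le_power2[of S] by linarith
  moreover have "(D - C)\<^sup>2 \<le> (1 + C)\<^sup>2"
    using assms by (subst abs_le_square_iff[symmetric]) auto
  ultimately have le: "4 * (1 - C\<^sup>2) * (D - C)\<^sup>2 \<le> 4 * (1 - C\<^sup>2) * (1 + C)\<^sup>2"
    by (intro mult_left_mono) auto
  have cubic: "4 * (1 - C\<^sup>2) * (1 + C)\<^sup>2 = 27/4 - 4 * (C - 1/2)\<^sup>2 * (C\<^sup>2 + 3*C + 11/4)"
    by (simp add: power2_eq_square field_simps)
  have pos: "C\<^sup>2 + 3*C + 11/4 > 0" using \<open>0 \<le> C\<close> zero_le_power2[of C] by linarith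
  then have gap: "0 \<le> 4 * (C - 1/2)\<^sup>2 * (C\<^sup>2 + 3*C + 11/4)" by simp
  show "(2*S*(D - C))\<^sup>2 \<le> 27/4" using F le cubic gap by linarith
  show "(2*S*(D - C))\<^sup>2 = 27/4 \<longleftrightarrow> C = 1/2 \<and> D = -1"
  proof
    assume max: "(2*S*(D - C))\<^sup>2 = 27/4"
    then have "4 * (C - 1/2)\<^sup>2 * (C\<^sup>2 + 3*C + 11/4) = 0" using F le cubic gap by linarith
    then have C: "C = 1/2" using pos by simp
    with max F have "4 * (1 - (1/2)\<^sup>2) * (D - 1/2)\<^sup>2 = 27/4" by simp
    then have "(D - 1/2)\<^sup>2 = (3/2)\<^sup>2" by (simp add: power2_eq_square)
    then have "D = 2 \<or> D = -1" by (auto simp: power2_eq_iff)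
    with \<open>\<bar>D\<bar> \<le> 1\<close> C show "C = 1/2 \<and> D = -1" by auto
  next
    assume "C = 1/2 \<and> D = -1"
    then have C: "C = 1/2" and D: "D = -1" by simp_all
    have "4 * (1 - C\<^sup>2) * (D - C)\<^sup>2 = 27/4" unfolding C D by (simp add: power2_eq_square)
    with F show "(2*S*(D - C))\<^sup>2 = 27/4" by linarith
  qed
qed

lemma half_angle_sq_bound:
  fixes S C D :: real
  assumes "S\<^sup>2 + C\<^sup>2 = 1" and "\<bar>D\<bar> \<le> 1"
  shows "(2*S*(D - C))\<^sup>2 \<le> 27/4"
    and "(2*S*(D - C))\<^sup>2 = 27/4 \<longleftrightarrow> (C = 1/2 \<and> D = -1) \<or> (C = -1/2 \<and> D = 1)"
proof -
  have flip: "(2*S*(-D - -C))\<^sup>2 = (2*S*(D - C))\<^sup>2" by (simp add: power2_eq_square algebra_simps)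
  consider "0 \<le> C" | "C < 0" by linarith
  then have "(2*S*(D - C))\<^sup>2 \<le> 27/4 \<and>
      ((2*S*(D - C))\<^sup>2 = 27/4 \<longleftrightarrow> (C = 1/2 \<and> D = -1) \<or> (C = -1/2 \<and> D = 1))"
  proof cases
    case 1
    then show ?thesis using half_angle_sq_bound_nonneg[OF assms] by auto
  next
    case 2
    then show ?thesis using half_angle_sq_bound_nonneg[of S "-C" "-D"] assms flip by auto
  qed
  then show "(2*S*(D - C))\<^sup>2 \<le> 27/4"
    and "(2*S*(D - C))\<^sup>2 = 27/4 \<longleftrightarrow> (C = 1/2 \<and> D = -1) \<or> (C = -1/2 \<and> D = 1)"
    by auto
qed

lemma half_angle_cos_poly_eq_iff:
  fixes C D :: real
  assumes "\<bar>D\<bar> \<le> 1"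
  shows "2*C*D + 2*C\<^sup>2 - 1 = -3/2 \<longleftrightarrow> (C = 1/2 \<and> D = -1) \<or> (C = -1/2 \<and> D = 1)"
proof
  assume "2*C*D + 2*C\<^sup>2 - 1 = -3/2"
  then have sum: "(\<bar>C\<bar> - 1/2)\<^sup>2 + (\<bar>C\<bar> + C*D) = 0"
    by (simp add: power2_eq_square algebra_simps)
  have "\<bar>C*D\<bar> \<le> \<bar>C\<bar>" using assms by (simp add: abs_mult mult_left_le)
  then have "\<bar>C\<bar> + C*D \<ge> 0" by linarith
  with sum have "(\<bar>C\<bar> - 1/2)\<^sup>2 = 0" and "\<bar>C\<bar> + C*D = 0"
    by (simp_all add: add_nonneg_eq_0_iff)
  then have "C = 1/2 \<or> C = -1/2" and "\<bar>C\<bar> + C*D = 0" by auto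
  then show "(C = 1/2 \<and> D = -1) \<or> (C = -1/2 \<and> D = 1)" by (elim disjE) auto
qed (elim disjE conjE; hypsubst; simp add: power2_eq_square)

lemma f21_sq_le: "(f21 t1 t2)\<^sup>2 \<le> 27/4"
  unfolding f21_half_angle by (rule half_angle_sq_bound) auto

lemma f21_sq_eq_iff: "(f21 t1 t2)\<^sup>2 = 27/4 \<longleftrightarrow> g21 t1 t2 = -3/2"
  unfolding f21_half_angle g21_half_angle
  by (simp only: half_angle_sq_bound(2)[OF sin_cos_squared_add abs_cos_le_one]
      half_angle_cos_poly_eq_iff[OF abs_cos_le_one])

lemma f21_pos:
  assumes "0 < t1" "t1 < t2" "t2 < 2*pi"
  shows "f21 t1 t2 > 0"
proof -
  have "sin (t1/2) > 0" "sin ((t2 - t1)/2) > 0" "sin (t2/2) > 0"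
    using assms by (auto intro!: sin_gt_zero)
  then show ?thesis unfolding f21_sin_prod by simp
qed

lemma f21_neg:
  assumes "0 < t2" "t2 < t1" "t1 < 2*pi"
  shows "f21 t1 t2 < 0"
proof -
  have "sin (t1/2) > 0" "sin ((t1 - t2)/2) > 0" "sin (t2/2) > 0"
    using assms by (auto intro!: sin_gt_zero)
  moreover have "sin ((t2 - t1)/2) = - sin ((t1 - t2)/2)"
    by (metis minus_diff_eq minus_divide_left sin_minus)
  ultimately show ?thesis unfolding f21_sin_prod by (simp add: mult_pos_neg)
qed

theorem lemma2p1:
  shows "(\<forall>t1\<in>{0..<2*pi}. \<forall>t2\<in>{0..<2*pi}.
            f21 t1 t2 \<in> {- (3 * sqrt 3 / 2) .. 3 * sqrt 3 / 2} \<and>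
            (f21 t1 t2 \<in> {- (3 * sqrt 3 / 2), 3 * sqrt 3 / 2} \<longleftrightarrow> g21 t1 t2 = - 3 / 2))
       \<and> (\<forall>t1\<in>{0..<2*pi}. \<forall>t2\<in>{0..<2*pi}.
            f21 t1 t1 = 0 \<and> f21 t1 0 = 0 \<and> f21 0 t2 = 0)
       \<and> (\<forall>t2\<in>{0<..<2*pi}.
            (\<forall>t1\<in>{0<..<t2}. f21 t1 t2 > 0) \<and>
            (\<forall>t1\<in>{t2<..<2*pi}. f21 t1 t2 < 0))"
proof (intro conjI ballI)
  fix t1 t2 :: real
  define a where "a = 3 * sqrt 3 / 2"
  have "a\<^sup>2 = 27/4" and "0 \<le> a" unfolding a_def by (simp_all add: power_divide power_mult_distrib)
  then have "\<bar>f21 t1 t2\<bar> \<le> a" and "f21 t1 t2 \<in> {-a, a} \<longleftrightarrow> (f21 t1 t2)\<^sup>2 = 27/4"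
    using f21_sq_le[of t1 t2] abs_le_square_iff[of "f21 t1 t2" a] power2_eq_iff[of "f21 t1 t2" a]
    by auto
  then show "f21 t1 t2 \<in> {- (3 * sqrt 3 / 2) .. 3 * sqrt 3 / 2}"
    and "f21 t1 t2 \<in> {- (3 * sqrt 3 / 2), 3 * sqrt 3 / 2} \<longleftrightarrow> g21 t1 t2 = - 3 / 2"
    unfolding a_def f21_sq_eq_iff by auto
  show "f21 t1 t1 = 0" "f21 t1 0 = 0" "f21 0 t2 = 0" unfolding f21_def by simp_all
qed (auto intro: f21_pos f21_neg)

end
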